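(* In $\mathscr{L}=\mathbf{Set}^{\mathbf{[R]}}$ as described in the context, every object $A$ has a unique destructor, i.e. there is exactly one morphism $A\to TI$ where $T$ is the allocation monad; but $\mathscr{L}$ is not a model of affine logic in the sense of having an isomorphism $I\cong\top$: the monoidal unit $I$ is not isomorphic to the terminal object $\top$ (indeed there is no morphism $[R]\to I$, where the object $[R]$ is terminal).
   Context: $\mathbf{[R]}$ is the set of finite lists of natural numbers, seen as a discrete category; $++$ is concatenation. $\mathscr{L}=\mathbf{Set}^{\mathbf{[R]}}$: objects are families of sets $A(l)$ indexed by lists $l$; morphisms $A\to B$ are families of functions $A(l)\to B(l)$. Monoidal product (Day convolution): $(A\otimes B)(l)=\coprod_{l_1++l_2=l}A(l_1)\times B(l_2)$; unit $I([])=\{()\}$, $I(l)=\emptyset$ for $l\ne[]$. Right closed structure: $(A\rhd B)(l_1)=\prod_{l_2}\big(A(l_2)\to B(l_1++l_2)\big)$, so that morphisms $C\otimes A\to B$ correspond to morphisms $C\to A\rhd B$. The object $[R]$ is given by $[R](l)=\{l\}$ for every $l$; it is a terminal object $\top$. The allocation monad is $TA=[R]\rhd(A\otimes[R])$, the monad of the adjunction $(-\otimes[R])\dashv([R]\rhd -)$. A destructor for $A$ is a morphism $A\to TI$. *)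

theory Defs
  imports Main
begin

text \<open>Objects of L = Set^[R]: families of sets indexed by lists of naturals.
  The elements live in some HOL type 'a.\<close>
type_synonym 'a obj = "nat list \<Rightarrow> 'a set"

text \<open>Morphisms A -> B: families of functions A(l) -> B(l), represented
  extensionally (value undefined outside A(l)), so equality of HOL functions
  is equality of morphisms.\<close>
definition hom :: "'a obj \<Rightarrow> 'b obj \<Rightarrow> (nat list \<Rightarrow> 'a \<Rightarrow> 'b) set" where
  "hom A B = {f. (\<forall>l a. a \<in> A l \<longrightarrow> f l a \<in> B l) \<and>
                 (\<forall>l a. a \<notin> A l \<longrightarrow> f l a = undefined)}"

definition iso_obj :: "'a obj \<Rightarrow> 'b obj \<Rightarrow> bool" where
  "iso_obj A B = (\<exists>f g. f \<in> hom A B \<and> g \<in> hom B A \<and>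
      (\<forall>l a. a \<in> A l \<longrightarrow> g l (f l a) = a) \<and>
      (\<forall>l b. b \<in> B l \<longrightarrow> f l (g l b) = b))"

text \<open>Day convolution: the coproduct over splittings l1 @ l2 = l is tagged by (l1,l2).\<close>
definition tensor :: "'a obj \<Rightarrow> 'b obj \<Rightarrow> ((nat list \<times> nat list) \<times> 'a \<times> 'b) obj" where
  "tensor A B l = {((l1, l2), (a, b)) | l1 l2 a b. l1 @ l2 = l \<and> a \<in> A l1 \<and> b \<in> B l2}"

definition unitI :: "unit obj" where
  "unitI l = (if l = [] then {()} else {})"

text \<open>Right closed structure: (A |> B)(l1) = prod_{l2} (A(l2) -> B(l1 @ l2)),
  elements represented as extensional dependent functions.\<close>
definition rhd :: "'a obj \<Rightarrow> 'b obj \<Rightarrow> (nat list \<Rightarrow> 'a \<Rightarrow> 'b) obj" where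
  "rhd A B l1 = {g. \<forall>l2 a. (a \<in> A l2 \<longrightarrow> g l2 a \<in> B (l1 @ l2)) \<and>
                          (a \<notin> A l2 \<longrightarrow> g l2 a = undefined)}"

definition Robj :: "nat list obj" where
  "Robj l = {l}"

definition Tm :: "'a obj \<Rightarrow> (nat list \<Rightarrow> nat list \<Rightarrow> (nat list \<times> nat list) \<times> 'a \<times> nat list) obj" where
  "Tm A = rhd Robj (tensor A Robj)"

definition destructors :: "'a obj \<Rightarrow> (nat list \<Rightarrow> 'a \<Rightarrow> (nat list \<Rightarrow> nat list \<Rightarrow> (nat list \<times> nat list) \<times> unit \<times> nat list)) set" where
  "destructors A = hom A (Tm unitI)"

end

theory Submission
  imports Defs
begin

text \<open>Both [R] and T I have exactly one element in every fibre, since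
  I \<otimes> [R] does and the right closed structure preserves this; so both are
  terminal, and destructors are unique. On the other hand I(l) is empty for
  l \<noteq> [] while [R](l) never is, so there is no morphism [R] \<rightarrow> I, let alone
  an isomorphism.\<close>

lemma hom_singleton_fibres:
  assumes "\<And>l. B l = {c l}"
  shows "hom A B = {\<lambda>l a. if a \<in> A l then c l else undefined}"
  using assms by (auto simp: hom_def intro!: ext)

corollary ex1_hom_singleton_fibres:
  assumes "\<And>l. B l = {c l}"
  shows "\<exists>!f. f \<in> hom A B"
  by (simp add: hom_singleton_fibres assms)

lemma rhd_singleton_fibres:
  assumes "\<And>l. B l = {c l}"
  shows "rhd A B l = {\<lambda>l2 a. if a \<in> A l2 then c (l @ l2) else undefined}"
  using assms by (auto simp: rhd_def intro!: ext)

lemma tensor_unitI_left: "tensor unitI B l = {(([], l), (), b) | b. b \<in> B l}"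
  by (auto simp: tensor_def unitI_def split: if_splits)

lemma Tm_unitI_singleton_fibres:
  "Tm unitI l = {\<lambda>l2 a. if a \<in> Robj l2 then (([], l @ l2), (), l @ l2) else undefined}"
proof -
  have "tensor unitI Robj m = {(([], m), (), m)}" for m
    by (simp add: tensor_unitI_left Robj_def)
  then show ?thesis
    unfolding Tm_def by (rule rhd_singleton_fibres)
qed

lemma hom_empty_if_empty_fibre:
  assumes "A l \<noteq> {}" and "B l = {}"
  shows "hom A B = {}"
  using assms unfolding hom_def by blast

lemma iso_obj_hom_nonempty: "iso_obj A B \<Longrightarrow> hom B A \<noteq> {}"
  unfolding iso_obj_def by blast

theorem proposition3:
  shows "(\<forall>A :: 'a obj. \<exists>!d. d \<in> destructors A)
       \<and> (\<forall>A :: 'b obj. \<exists>!f. f \<in> hom A Robj)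
       \<and> \<not> iso_obj unitI Robj
       \<and> hom Robj unitI = {}"
proof (intro conjI allI)
  fix A :: "'a obj"
  show "\<exists>!d. d \<in> destructors A"
    unfolding destructors_def
    by (rule ex1_hom_singleton_fibres[OF Tm_unitI_singleton_fibres])
next
  fix A :: "'b obj"
  show "\<exists>!f. f \<in> hom A Robj"
    by (rule ex1_hom_singleton_fibres) (simp add: Robj_def)
next
  show "hom Robj unitI = {}"
    by (rule hom_empty_if_empty_fibre[of _ "[0]"]) (simp_all add: Robj_def unitI_def)
  then show "\<not> iso_obj unitI Robj"
    using iso_obj_hom_nonempty by blast
qed

end
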